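(* Let $\mathbf X=\{X(\tilde r)\}_{\tilde r\in\mathbb N_0^d}$ be an $\mathbf F$-supermartingale, $\tilde s\in\mathbb N_0^d$, and $\tilde T\in\mathcal A(\tilde s)$. Then $\{X(\tilde T(t))\}_{t\in\mathbb N_0}$ is an $\mathbf F(\tilde T)$-supermartingale.
   Context: $(\Omega,\mathcal F,\mathbb P)$ complete; $\mathbf F=\{\mathcal F(\tilde s)\}_{\tilde s\in\mathbb N_0^d}$ satisfies (F1) monotonicity in the componentwise order, (F2) $\mathcal F(\tilde 0)$ contains all null sets, (F4) $\mathcal F(\tilde s),\mathcal F(\tilde r)$ conditionally independent given $\mathcal F(\tilde s\wedge\tilde r)$. $\mathbf X$ is an $\mathbf F$-supermartingale if each $X(\tilde s)$ is integrable, $\mathcal F(\tilde s)$-measurable, and $\mathbb E[X(\tilde r)\mid\mathcal F(\tilde s)]\le X(\tilde s)$ a.s. for $\tilde s\le\tilde r$. An allocation strategy for $\tilde s$ is an $\mathbb N_0^d$-valued $\{\tilde T(t)\}_{t\in\mathbb N_0}$ with $\tilde T(0)=\tilde s$, $\tilde T(t+1)=\tilde T(t)+\tilde e_j$ for some $j$ ($\tilde e_j$ unit vectors), and $\{\tilde T(t+1)=\tilde T(t)+\tilde e_j,\ \tilde T(t)=\tilde r\}\in\mathcal F(\tilde r)$; $\mathcal A(\tilde s)$ is their set. For a stopping point $\tilde\nu$ (i.e. $\{\tilde\nu=\tilde r\}\in\mathcal F(\tilde r)$ for all $\tilde r$), $\mathcal F(\tilde\nu):=\{A:A\cap\{\tilde\nu=\tilde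 r\}\in\mathcal F(\tilde r)\ \forall\tilde r\}$; $\mathbf F(\tilde T):=\{\mathcal F(\tilde T(t))\}_{t\in\mathbb N_0}$. *)

theory Defs
  imports "HOL-Probability.Probability"
begin

text \<open>Multiparameter index set: N_0^d is rendered as functions 'd \<Rightarrow> nat for a finite type 'd,
  ordered componentwise (the pointwise order on functions); componentwise minimum is inf.\<close>

definition unit_vec :: "'d \<Rightarrow> ('d \<Rightarrow> nat)" where
  "unit_vec j = (\<lambda>i. if i = j then 1 else 0)"

definition cond_indep :: "'a measure \<Rightarrow> 'a measure \<Rightarrow> 'a measure \<Rightarrow> 'a measure \<Rightarrow> bool" where
  "cond_indep M A B G \<longleftrightarrow>
     (\<forall>a\<in>sets A. \<forall>b\<in>sets B.
        AE \<omega> in M. real_cond_exp M G (indicator (a \<inter> b)) \<omega>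
                   = real_cond_exp M G (indicator a) \<omega> * real_cond_exp M G (indicator b) \<omega>)"

text \<open>The filtration conditions (F1), (F2), (F4), together with the standing requirement that
  every F(s) is a sub-sigma-algebra of the underlying probability space.\<close>
definition multi_filtration :: "'a measure \<Rightarrow> (('d::finite \<Rightarrow> nat) \<Rightarrow> 'a measure) \<Rightarrow> bool" where
  "multi_filtration M F \<longleftrightarrow>
     (\<forall>s. subalgebra M (F s)) \<and>
     (\<forall>s r. s \<le> r \<longrightarrow> sets (F s) \<subseteq> sets (F r)) \<and>
     null_sets M \<subseteq> sets (F (\<lambda>_. 0)) \<and>
     (\<forall>s r. cond_indep M (F s) (F r) (F (inf s r)))"

definition supermartingale :: "'a measure \<Rightarrow> ('i::order \<Rightarrow> 'a measure) \<Rightarrow> ('i \<Rightarrow> 'a \<Rightarrow> real) \<Rightarrow> bool" where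
  "supermartingale M F X \<longleftrightarrow>
     (\<forall>s. integrable M (X s) \<and> X s \<in> borel_measurable (F s)) \<and>
     (\<forall>s r. s \<le> r \<longrightarrow> (AE \<omega> in M. real_cond_exp M (F s) (X r) \<omega> \<le> X s \<omega>))"

definition allocation_strategy ::
  "'a measure \<Rightarrow> (('d::finite \<Rightarrow> nat) \<Rightarrow> 'a measure) \<Rightarrow> ('d \<Rightarrow> nat) \<Rightarrow> (nat \<Rightarrow> 'a \<Rightarrow> ('d \<Rightarrow> nat)) \<Rightarrow> bool" where
  "allocation_strategy M F s T \<longleftrightarrow>
     (\<forall>\<omega>\<in>space M. T 0 \<omega> = s) \<and>
     (\<forall>t. \<forall>\<omega>\<in>space M. \<exists>j. T (Suc t) \<omega> = (\<lambda>i. T t \<omega> i + unit_vec j i)) \<and>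
     (\<forall>t j r. {\<omega>\<in>space M. T (Suc t) \<omega> = (\<lambda>i. T t \<omega> i + unit_vec j i) \<and> T t \<omega> = r} \<in> sets (F r))"

definition stopping_point :: "'a measure \<Rightarrow> (('d::finite \<Rightarrow> nat) \<Rightarrow> 'a measure) \<Rightarrow> ('a \<Rightarrow> ('d \<Rightarrow> nat)) \<Rightarrow> bool" where
  "stopping_point M F \<nu> \<longleftrightarrow> (\<forall>r. {\<omega>\<in>space M. \<nu> \<omega> = r} \<in> sets (F r))"

definition stopped_sigma :: "'a measure \<Rightarrow> (('d::finite \<Rightarrow> nat) \<Rightarrow> 'a measure) \<Rightarrow> ('a \<Rightarrow> ('d \<Rightarrow> nat)) \<Rightarrow> 'a measure" where
  "stopped_sigma M F \<nu> = sigma (space M) {A. A \<subseteq> space M \<and> (\<forall>r. A \<inter> {\<omega>\<in>space M. \<nu> \<omega> = r} \<in> sets (F r))}"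

end

theory Submission
  imports Defs
begin

text \<open>For \<open>A \<in> F(T t)\<close> split \<open>A\<close> into the finitely many pieces on which \<open>T t = r\<close> and
  \<open>T (t + 1) = r + e\<^sub>j\<close>. Each piece lies in \<open>F(r)\<close>, because the allocation decision at
  \<open>r\<close> is \<open>F(r)\<close>-measurable, so integrating the supermartingale inequality
  \<open>E[X(r + e\<^sub>j) | F(r)] \<le> X(r)\<close> over it and summing gives
  \<open>\<integral>\<^sub>A X(T (t + 1)) \<le> \<integral>\<^sub>A X(T t)\<close>. As \<open>F(T t) \<subseteq> F(T (t + 1))\<close>, these one-step inequalities
  chain.\<close>

lemma set_integral_mono_partition:
  fixes f g :: "'a \<Rightarrow> real"
  assumes "finite I" and "disjoint_family_on C I" and C: "\<And>i. i \<in> I \<Longrightarrow> C i \<in> sets M"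
    and f: "integrable M f" and g: "integrable M g"
    and le: "\<And>i. i \<in> I \<Longrightarrow> (\<integral>x\<in>C i. f x \<partial>M) \<le> (\<integral>x\<in>C i. g x \<partial>M)"
  shows "(\<integral>x\<in>(\<Union>i\<in>I. C i). f x \<partial>M) \<le> (\<integral>x\<in>(\<Union>i\<in>I. C i). g x \<partial>M)"
proof -
  have disj: "AE x in M. x \<in> C i \<and> x \<in> C j \<longrightarrow> i = j" if "i \<in> I" "j \<in> I" for i j
    using \<open>disjoint_family_on C I\<close> that by (intro AE_I2) (auto simp: disjoint_family_on_def)
  have set_int: "set_integrable M (C i) u" if "i \<in> I" "integrable M u" for i and u :: "'a \<Rightarrow> real"
    using integrable_mult_indicator[OF C[OF \<open>i \<in> I\<close>] \<open>integrable M u\<close>] by (simp add: set_integrable_def)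
  have "(\<integral>x\<in>(\<Union>i\<in>I. C i). f x \<partial>M) = (\<Sum>i\<in>I. \<integral>x\<in>C i. f x \<partial>M)"
    using \<open>finite I\<close> disj C set_int[OF _ f] by (rule set_integral_finite_UN_AE)
  also have "\<dots> \<le> (\<Sum>i\<in>I. \<integral>x\<in>C i. g x \<partial>M)" using le by (rule sum_mono)
  also have "\<dots> = (\<integral>x\<in>(\<Union>i\<in>I. C i). g x \<partial>M)"
    using \<open>finite I\<close> disj C set_int[OF _ g] by (rule set_integral_finite_UN_AE[symmetric])
  finally show ?thesis .
qed

context sigma_finite_subalgebra
begin

lemma AE_real_cond_exp_le_iff_set_integral_le:
  fixes f g :: "'a \<Rightarrow> real"
  assumes f: "integrable M f" and g: "integrable M g" and g_F: "g \<in> borel_measurable F"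
  shows "(AE x in M. real_cond_exp M F f x \<le> g x) \<longleftrightarrow>
         (\<forall>A\<in>sets F. (\<integral>x\<in>A. f x \<partial>M) \<le> (\<integral>x\<in>A. g x \<partial>M))"
proof -
  let ?h = "real_cond_exp M F f"
  have h: "integrable M ?h" using f by (rule real_cond_exp_int)
  have set_int: "set_integrable M A u" if "A \<in> sets F" "integrable M u" for A and u :: "'a \<Rightarrow> real"
    using that subalg integrable_mult_indicator[of A M u]
    by (auto simp: set_integrable_def subalgebra_def)
  show ?thesis
  proof
    assume le: "AE x in M. ?h x \<le> g x"
    show "\<forall>A\<in>sets F. (\<integral>x\<in>A. f x \<partial>M) \<le> (\<integral>x\<in>A. g x \<partial>M)"
    proof
      fix A assume A: "A \<in> sets F"
      have "(\<integral>x\<in>A. f x \<partial>M) = (\<integral>x\<in>A. ?h x \<partial>M)" using f A by (rule real_cond_exp_intA)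
      also have "\<dots> \<le> (\<integral>x\<in>A. g x \<partial>M)"
        using le by (intro set_integral_mono_AE set_int A h g) auto
      finally show "(\<integral>x\<in>A. f x \<partial>M) \<le> (\<integral>x\<in>A. g x \<partial>M)" .
    qed
  next
    assume le: "\<forall>A\<in>sets F. (\<integral>x\<in>A. f x \<partial>M) \<le> (\<integral>x\<in>A. g x \<partial>M)"
    define D where "D = {x\<in>space M. g x < ?h x}"
    have "D = {x\<in>space F. g x < ?h x}"
      using subalg by (simp add: D_def subalgebra_def)
    also have "\<dots> \<in> sets F" using g_F by measurable
    finally have D: "D \<in> sets F" .
    have "(\<integral>x\<in>D. ?h x - g x \<partial>M) = (\<integral>x\<in>D. f x \<partial>M) - (\<integral>x\<in>D. g x \<partial>M)"
      using real_cond_exp_intA[OF f D] by (simp add: set_int D h g)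
    also have "\<dots> \<le> 0" using le D by simp
    finally have "(\<integral>x. indicator D x * (?h x - g x) \<partial>M) \<le> 0"
      by (simp add: set_lebesgue_integral_def)
    moreover have nonneg: "AE x in M. 0 \<le> indicator D x * (?h x - g x)"
      by (auto simp: D_def indicator_def)
    moreover have "integrable M (\<lambda>x. indicator D x * (?h x - g x))"
      using set_int[OF D, of "\<lambda>x. ?h x - g x"] h g by (simp add: set_integrable_def)
    ultimately have "AE x in M. indicator D x * (?h x - g x) = 0"
      by (subst integral_nonneg_eq_0_iff_AE[symmetric]) (auto intro: order.antisym integral_nonneg_AE)
    with AE_space show "AE x in M. ?h x \<le> g x"
      by eventually_elim (auto simp: D_def indicator_def split: if_splits)
  qed
qed

end

lemma supermartingale_set_integral_le:
  fixes F :: "'i::order \<Rightarrow> 'a measure"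
  assumes "finite_measure M" and "\<And>r. subalgebra M (F r)" and X: "supermartingale M F X"
    and "r \<le> r'" and "C \<in> sets (F r)"
  shows "(\<integral>x\<in>C. X r' x \<partial>M) \<le> (\<integral>x\<in>C. X r x \<partial>M)"
proof -
  interpret finite_measure_subalgebra M "F r"
    using assms(1,2) by (simp add: finite_measure_subalgebra_def finite_measure_subalgebra_axioms_def)
  have "AE x in M. real_cond_exp M (F r) (X r') x \<le> X r x"
    using X \<open>r \<le> r'\<close> by (simp add: supermartingale_def)
  then show ?thesis
    using X \<open>C \<in> sets (F r)\<close> by (subst (asm) AE_real_cond_exp_le_iff_set_integral_le)
      (auto simp: supermartingale_def)
qed

lemma supermartingale_nat_SucI:
  fixes G :: "nat \<Rightarrow> 'a measure" and Y :: "nat \<Rightarrow> 'a \<Rightarrow> real"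
  assumes "finite_measure M"
    and sub: "\<And>t. subalgebra M (G t)"
    and mono: "\<And>t. sets (G t) \<subseteq> sets (G (Suc t))"
    and int: "\<And>t. integrable M (Y t)"
    and adapted: "\<And>t. Y t \<in> borel_measurable (G t)"
    and Suc_le: "\<And>t A. A \<in> sets (G t) \<Longrightarrow> (\<integral>x\<in>A. Y (Suc t) x \<partial>M) \<le> (\<integral>x\<in>A. Y t x \<partial>M)"
  shows "supermartingale M G Y"
proof -
  have le: "(\<integral>x\<in>A. Y u x \<partial>M) \<le> (\<integral>x\<in>A. Y t x \<partial>M)" if "t \<le> u" "A \<in> sets (G t)" for t u A
    using \<open>t \<le> u\<close>
  proof (induction u rule: dec_induct)
    case (step u)
    have "A \<in> sets (G u)"
      using lift_Suc_mono_le[of "\<lambda>t. sets (G t)", OF mono \<open>t \<le> u\<close>] \<open>A \<in> sets (G t)\<close> by blast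
    then show ?case using Suc_le step.IH by (meson order.trans)
  qed simp
  have "AE x in M. real_cond_exp M (G t) (Y u) x \<le> Y t x" if "t \<le> u" for t u
  proof -
    interpret finite_measure_subalgebra M "G t"
      using \<open>finite_measure M\<close> sub by (simp add: finite_measure_subalgebra_def finite_measure_subalgebra_axioms_def)
    show ?thesis
      using le \<open>t \<le> u\<close> by (simp add: AE_real_cond_exp_le_iff_set_integral_le int adapted)
  qed
  then show ?thesis using int adapted by (simp add: supermartingale_def)
qed

lemma sets_stopped_sigma:
  assumes "stopping_point M F \<nu>"
  shows "sets (stopped_sigma M F \<nu>) =
    {A. A \<subseteq> space M \<and> (\<forall>r. A \<inter> {\<omega>\<in>space M. \<nu> \<omega> = r} \<in> sets (F r))}" (is "_ = ?S")
proof -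
  have "sigma_algebra (space M) ?S"
    unfolding sigma_algebra_iff2
  proof (intro conjI allI impI ballI)
    fix A assume A: "A \<in> ?S"
    have "(space M - A) \<inter> {\<omega>\<in>space M. \<nu> \<omega> = r} \<in> sets (F r)" for r
    proof -
      have "(space M - A) \<inter> {\<omega>\<in>space M. \<nu> \<omega> = r} =
          {\<omega>\<in>space M. \<nu> \<omega> = r} - A \<inter> {\<omega>\<in>space M. \<nu> \<omega> = r}"
        by blast
      also have "\<dots> \<in> sets (F r)"
        using A assms by (intro sets.Diff) (auto simp: stopping_point_def)
      finally show ?thesis .
    qed
    then show "space M - A \<in> ?S" by blast
  next
    fix A :: "nat \<Rightarrow> 'a set" assume A: "range A \<subseteq> ?S"
    have "(\<Union>i. A i) \<inter> {\<omega>\<in>space M. \<nu> \<omega> = r} \<in> sets (F r)" for r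
    proof -
      have "(\<Union>i. A i) \<inter> {\<omega>\<in>space M. \<nu> \<omega> = r} = (\<Union>i. A i \<inter> {\<omega>\<in>space M. \<nu> \<omega> = r})"
        by blast
      also have "\<dots> \<in> sets (F r)"
        using A by (intro sets.countable_UN'') auto
      finally show ?thesis .
    qed
    then show "(\<Union>i. A i) \<in> ?S" using A by blast
  qed auto
  then show ?thesis
    unfolding stopped_sigma_def by (subst sets_measure_of) (auto simp: sigma_algebra.sigma_sets_eq)
qed

lemma space_stopped_sigma [simp]: "space (stopped_sigma M F \<nu>) = space M"
  unfolding stopped_sigma_def by (subst space_measure_of) auto

lemma subalgebra_stopped_sigma:
  assumes "stopping_point M F \<nu>" and "\<And>r. sets (F r) \<subseteq> sets M"
  shows "subalgebra M (stopped_sigma M F \<nu>)"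
proof -
  have "A \<in> sets M" if A: "A \<in> sets (stopped_sigma M F \<nu>)" for A
  proof -
    have "A = (\<Union>r. A \<inter> {\<omega>\<in>space M. \<nu> \<omega> = r})"
      using A sets.sets_into_space by fastforce
    also have "\<dots> \<in> sets M"
      using A assms by (intro sets.countable_UN'') (auto simp: sets_stopped_sigma)
    finally show ?thesis .
  qed
  then show ?thesis by (auto simp: subalgebra_def)
qed

lemma sets_stopped_sigma_mono:
  assumes "stopping_point M F \<nu>" and "stopping_point M F \<nu>'"
    and le: "\<And>\<omega>. \<omega> \<in> space M \<Longrightarrow> \<nu> \<omega> \<le> \<nu>' \<omega>"
    and mono: "\<And>r r'. r \<le> r' \<Longrightarrow> sets (F r) \<subseteq> sets (F r')"
  shows "sets (stopped_sigma M F \<nu>) \<subseteq> sets (stopped_sigma M F \<nu>')"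
proof
  fix A assume A: "A \<in> sets (stopped_sigma M F \<nu>)"
  have "A \<inter> {\<omega>\<in>space M. \<nu>' \<omega> = r'} \<in> sets (F r')" for r'
  proof -
    have "A \<inter> {\<omega>\<in>space M. \<nu>' \<omega> = r'} =
        (\<Union>r\<in>{..r'}. (A \<inter> {\<omega>\<in>space M. \<nu> \<omega> = r}) \<inter> {\<omega>\<in>space M. \<nu>' \<omega> = r'})"
      using le by auto
    also have "\<dots> \<in> sets (F r')"
    proof (intro sets.countable_UN'' sets.Int[of "A \<inter> _"])
      fix r assume "r \<in> {..r'}"
      then show "A \<inter> {\<omega>\<in>space M. \<nu> \<omega> = r} \<in> sets (F r')"
        using A assms(1) mono[of r r'] by (auto simp: sets_stopped_sigma)
      show "{\<omega>\<in>space M. \<nu>' \<omega> = r'} \<in> sets (F r')"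
        using assms(2) by (simp add: stopping_point_def)
    qed (rule countableI_type)
    finally show ?thesis .
  qed
  then show "A \<in> sets (stopped_sigma M F \<nu>')"
    using A assms(1,2) by (simp add: sets_stopped_sigma)
qed

lemma borel_measurable_stopped_process:
  fixes X :: "('d::finite \<Rightarrow> nat) \<Rightarrow> 'a \<Rightarrow> real"
  assumes "stopping_point M F \<nu>" and sub: "\<And>r. subalgebra M (F r)"
    and X: "\<And>r. X r \<in> borel_measurable (F r)"
  shows "(\<lambda>\<omega>. X (\<nu> \<omega>) \<omega>) \<in> borel_measurable (stopped_sigma M F \<nu>)"
proof (rule measurableI)
  fix S :: "real set" assume S: "S \<in> sets borel"
  have "(\<lambda>\<omega>. X (\<nu> \<omega>) \<omega>) -` S \<inter> space M \<inter> {\<omega>\<in>space M. \<nu> \<omega> = r} =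
      (X r -` S \<inter> space (F r)) \<inter> {\<omega>\<in>space M. \<nu> \<omega> = r}" for r
    using sub by (auto simp: subalgebra_def)
  then show "(\<lambda>\<omega>. X (\<nu> \<omega>) \<omega>) -` S \<inter> space (stopped_sigma M F \<nu>) \<in> sets (stopped_sigma M F \<nu>)"
    using assms measurable_sets[OF X S] by (auto simp: sets_stopped_sigma stopping_point_def)
qed auto

lemma integrable_stopped_process:
  fixes X :: "'i \<Rightarrow> 'a \<Rightarrow> real"
  assumes "finite (\<nu> ` space M)" and "\<And>r. {\<omega>\<in>space M. \<nu> \<omega> = r} \<in> sets M"
    and "\<And>r. integrable M (X r)"
  shows "integrable M (\<lambda>\<omega>. X (\<nu> \<omega>) \<omega>)"
proof -
  have "integrable M (\<lambda>\<omega>. \<Sum>r\<in>\<nu> ` space M. X r \<omega> * indicator {\<omega>\<in>space M. \<nu> \<omega> = r} \<omega>)"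
    using assms by (intro Bochner_Integration.integrable_sum integrable_real_mult_indicator)
  moreover have "(\<Sum>r\<in>\<nu> ` space M. X r \<omega> * indicator {\<omega>\<in>space M. \<nu> \<omega> = r} \<omega>) = X (\<nu> \<omega>) \<omega>"
    if "\<omega> \<in> space M" for \<omega>
  proof -
    have "(\<Sum>r\<in>\<nu> ` space M. X r \<omega> * indicator {\<omega>\<in>space M. \<nu> \<omega> = r} \<omega>) =
        (\<Sum>r\<in>\<nu> ` space M. if r = \<nu> \<omega> then X (\<nu> \<omega>) \<omega> else 0)"
      using that by (intro sum.cong) (auto simp: indicator_def)
    then show ?thesis using that \<open>finite (\<nu> ` space M)\<close> by simp
  qed
  ultimately show ?thesis by (simp cong: Bochner_Integration.integrable_cong)
qed

lemma add_unit_vec_eq_iff: "(\<lambda>i. r i + unit_vec j i) = (\<lambda>i. r i + unit_vec k i) \<longleftrightarrow> j = k"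
proof
  assume "(\<lambda>i. r i + unit_vec j i) = (\<lambda>i. r i + unit_vec k i)"
  then have "r j + unit_vec j j = r j + unit_vec k j" by (rule fun_cong)
  then show "j = k" by (simp add: unit_vec_def split: if_splits)
qed simp

lemma allocation_strategy_SucE:
  assumes "allocation_strategy M F s T" and "\<omega> \<in> space M"
  obtains j where "T (Suc t) \<omega> = (\<lambda>i. T t \<omega> i + unit_vec j i)"
  using assms unfolding allocation_strategy_def by blast

lemma allocation_strategy_le_Suc:
  assumes "allocation_strategy M F s T" and "\<omega> \<in> space M"
  shows "T t \<omega> \<le> T (Suc t) \<omega>"
  using assms by (elim allocation_strategy_SucE[where t = t]) (auto simp: le_fun_def)

lemma finite_allocation_strategy_range:
  assumes "allocation_strategy M F s T"
  shows "finite (T t ` space M)"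
proof (induction t)
  case 0
  have "T 0 ` space M \<subseteq> {s}" using assms by (auto simp: allocation_strategy_def)
  then show ?case by (rule finite_subset) simp
next
  case (Suc t)
  have "T (Suc t) \<omega> \<in> (\<lambda>(r, j) i. r i + unit_vec j i) ` (T t ` space M \<times> UNIV)"
    if "\<omega> \<in> space M" for \<omega>
    using assms that by (elim allocation_strategy_SucE[where t = t]) (auto intro!: image_eqI)
  then have "T (Suc t) ` space M \<subseteq> (\<lambda>(r, j) i. r i + unit_vec j i) ` (T t ` space M \<times> UNIV)"
    by blast
  then show ?case by (rule finite_subset) (simp add: Suc.IH)
qed

definition step_event :: "'a measure \<Rightarrow> (nat \<Rightarrow> 'a \<Rightarrow> ('d \<Rightarrow> nat)) \<Rightarrow> nat \<Rightarrow> ('d \<Rightarrow> nat) \<Rightarrow> 'd \<Rightarrow> 'a set"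
  where "step_event M T t r j = {\<omega>\<in>space M. T (Suc t) \<omega> = (\<lambda>i. T t \<omega> i + unit_vec j i) \<and> T t \<omega> = r}"

lemma step_event_in_sets:
  assumes "allocation_strategy M F s T"
  shows "step_event M T t r j \<in> sets (F r)"
  using assms by (simp add: allocation_strategy_def step_event_def)

lemma disjoint_family_on_step_event:
  "disjoint_family_on (\<lambda>(r, j). A \<inter> step_event M T t r j) I"
  by (auto simp: disjoint_family_on_def step_event_def add_unit_vec_eq_iff)

lemma UN_step_event:
  assumes "allocation_strategy M F s T" and "A \<subseteq> space M"
  shows "A = (\<Union>(r, j)\<in>T t ` space M \<times> UNIV. A \<inter> step_event M T t r j)"
proof -
  have "\<omega> \<in> (\<Union>(r, j)\<in>T t ` space M \<times> UNIV. A \<inter> step_event M T t r j)" if \<omega>: "\<omega> \<in> A" for \<omega>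
  proof -
    obtain j where "T (Suc t) \<omega> = (\<lambda>i. T t \<omega> i + unit_vec j i)"
      using allocation_strategy_SucE[OF assms(1)] \<omega> assms(2) by blast
    then show ?thesis
      using \<omega> assms(2) by (intro UN_I[of "(T t \<omega>, j)"]) (auto simp: step_event_def)
  qed
  then show ?thesis by auto
qed

lemma stopping_point_allocation_strategy:
  assumes "allocation_strategy M F s T"
  shows "stopping_point M F (T t)"
  unfolding stopping_point_def
proof
  fix r
  have "{\<omega>\<in>space M. T t \<omega> = r} = (\<Union>j. step_event M T t r j)"
    using assms by (auto simp: step_event_def elim: allocation_strategy_SucE)
  also have "\<dots> \<in> sets (F r)"
    using assms by (intro sets.countable_UN'' step_event_in_sets) auto
  finally show "{\<omega>\<in>space M. T t \<omega> = r} \<in> sets (F r)" .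
qed

lemma integrable_allocation_strategy_process:
  fixes X :: "('d::finite \<Rightarrow> nat) \<Rightarrow> 'a \<Rightarrow> real"
  assumes "\<And>r. sets (F r) \<subseteq> sets M" and "\<And>r. integrable M (X r)"
    and T: "allocation_strategy M F s T"
  shows "integrable M (\<lambda>\<omega>. X (T t \<omega>) \<omega>)"
proof (rule integrable_stopped_process[where \<nu> = "T t" and X = X])
  show "finite (T t ` space M)" using T by (rule finite_allocation_strategy_range)
  show "{\<omega>\<in>space M. T t \<omega> = r} \<in> sets M" for r
    using stopping_point_allocation_strategy[OF T] assms(1) unfolding stopping_point_def by blast
  show "integrable M (X r)" for r by fact
qed

lemma allocation_strategy_set_integral_Suc_le:
  fixes X :: "('d::finite \<Rightarrow> nat) \<Rightarrow> 'a \<Rightarrow> real"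
  assumes "finite_measure M" and sub: "\<And>r. subalgebra M (F r)"
    and X: "supermartingale M F X" and T: "allocation_strategy M F s T"
    and A: "A \<in> sets (stopped_sigma M F (T t))"
  shows "(\<integral>\<omega>\<in>A. X (T (Suc t) \<omega>) \<omega> \<partial>M) \<le> (\<integral>\<omega>\<in>A. X (T t \<omega>) \<omega> \<partial>M)"
proof -
  let ?I = "T t ` space M \<times> (UNIV :: 'd set)"
  let ?C = "\<lambda>(r, j). A \<inter> step_event M T t r j"
  have sets_M: "sets (F r) \<subseteq> sets M" for r using sub by (simp add: subalgebra_def)
  have X_int: "integrable M (X r)" for r using X by (simp add: supermartingale_def)
  have int: "integrable M (\<lambda>\<omega>. X (T u \<omega>) \<omega>)" for u
    using sets_M X_int T by (rule integrable_allocation_strategy_process)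
  have C_F: "A \<inter> step_event M T t r j \<in> sets (F r)" for r j
  proof -
    have "A \<inter> step_event M T t r j = (A \<inter> {\<omega>\<in>space M. T t \<omega> = r}) \<inter> step_event M T t r j"
      by (auto simp: step_event_def)
    then show ?thesis
      using A stopping_point_allocation_strategy[OF T] step_event_in_sets[OF T]
      by (auto simp: sets_stopped_sigma)
  qed
  have "(\<integral>\<omega>\<in>(\<Union>i\<in>?I. ?C i). X (T (Suc t) \<omega>) \<omega> \<partial>M) \<le> (\<integral>\<omega>\<in>(\<Union>i\<in>?I. ?C i). X (T t \<omega>) \<omega> \<partial>M)"
  proof (rule set_integral_mono_partition[OF _ _ _ int int])
    show "finite ?I" using finite_allocation_strategy_range[OF T] by simp
    show "?C i \<in> sets M" for i using C_F sets_M by (cases i) auto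
  next
    fix i assume "i \<in> ?I"
    obtain r j where i: "i = (r, j)" by fastforce
    have "(\<integral>\<omega>\<in>?C i. X (T (Suc t) \<omega>) \<omega> \<partial>M) = (\<integral>\<omega>\<in>?C i. X (\<lambda>k. r k + unit_vec j k) \<omega> \<partial>M)"
      using C_F sets_M by (intro set_lebesgue_integral_cong) (auto simp: i step_event_def)
    also have "\<dots> \<le> (\<integral>\<omega>\<in>?C i. X r \<omega> \<partial>M)"
      using supermartingale_set_integral_le[OF \<open>finite_measure M\<close> sub X, of r] C_F[of r j]
      by (simp add: i le_fun_def)
    also have "\<dots> = (\<integral>\<omega>\<in>?C i. X (T t \<omega>) \<omega> \<partial>M)"
      using C_F sets_M by (intro set_lebesgue_integral_cong) (auto simp: i step_event_def)
    finally show "(\<integral>\<omega>\<in>?C i. X (T (Suc t) \<omega>) \<omega> \<partial>M) \<le> (\<integral>\<omega>\<in>?C i. X (T t \<omega>) \<omega> \<partial>M)" .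
  qed (rule disjoint_family_on_step_event)
  then show ?thesis
    using UN_step_event[OF T, of A t] sets.sets_into_space[OF A] by simp
qed

theorem proposition6p11:
  fixes M :: "'a measure"
    and F :: "('d::finite \<Rightarrow> nat) \<Rightarrow> 'a measure"
    and X :: "('d \<Rightarrow> nat) \<Rightarrow> 'a \<Rightarrow> real"
    and s :: "'d \<Rightarrow> nat"
    and T :: "nat \<Rightarrow> 'a \<Rightarrow> ('d \<Rightarrow> nat)"
  assumes "prob_space M"
    and "complete_measure M"
    and "multi_filtration M F"
    and "supermartingale M F X"
    and "allocation_strategy M F s T"
  shows "supermartingale M (\<lambda>t. stopped_sigma M F (T t)) (\<lambda>t \<omega>. X (T t \<omega>) \<omega>)"
proof -
  have fin: "finite_measure M" using \<open>prob_space M\<close> by (simp add: prob_space_def)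
  have sub: "\<And>r. subalgebra M (F r)" and mono: "\<And>r r'. r \<le> r' \<Longrightarrow> sets (F r) \<subseteq> sets (F r')"
    using \<open>multi_filtration M F\<close> by (simp_all add: multi_filtration_def)
  have sets_M: "\<And>r. sets (F r) \<subseteq> sets M" using sub by (simp add: subalgebra_def)
  have X_int: "\<And>r. integrable M (X r)" and X_meas: "\<And>r. X r \<in> borel_measurable (F r)"
    using \<open>supermartingale M F X\<close> by (simp_all add: supermartingale_def)
  note stop = stopping_point_allocation_strategy[OF \<open>allocation_strategy M F s T\<close>]
  show ?thesis
  proof (rule supermartingale_nat_SucI[OF fin])
    show "subalgebra M (stopped_sigma M F (T t))" for t
      using stop sets_M by (rule subalgebra_stopped_sigma)
    show "sets (stopped_sigma M F (T t)) \<subseteq> sets (stopped_sigma M F (T (Suc t)))" for t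
      using stop stop allocation_strategy_le_Suc[OF \<open>allocation_strategy M F s T\<close>] mono
      by (rule sets_stopped_sigma_mono)
    show "integrable M (\<lambda>\<omega>. X (T t \<omega>) \<omega>)" for t
      using sets_M X_int \<open>allocation_strategy M F s T\<close> by (rule integrable_allocation_strategy_process)
    show "(\<lambda>\<omega>. X (T t \<omega>) \<omega>) \<in> borel_measurable (stopped_sigma M F (T t))" for t
      using stop sub X_meas by (rule borel_measurable_stopped_process)
    show "(\<integral>\<omega>\<in>A. X (T (Suc t) \<omega>) \<omega> \<partial>M) \<le> (\<integral>\<omega>\<in>A. X (T t \<omega>) \<omega> \<partial>M)"
      if "A \<in> sets (stopped_sigma M F (T t))" for t A
      using fin sub \<open>supermartingale M F X\<close> \<open>allocation_strategy M F s T\<close> that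
      by (rule allocation_strategy_set_integral_Suc_le)
  qed
qed

end
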